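(* Let $0<a<b<1$ with $a+b=1$, $m\in C^1([0,1])$ non-constant, $c\in C([0,1])$, and assume (H1), (H2) and $m\in S_{\mathcal{N}}$. Then $\limsup_{s\to+\infty}\lambda(s)\le\lambda^{\mathcal{N}}$.
   Context: Fix an integer $d\ge1$. $\lambda(s)$ denotes the principal eigenvalue of $-\varphi''-\frac{d-1}{r}\varphi'-2s\,m'(r)\varphi'+c(r)\varphi=\lambda\varphi$ on $(0,1)$, $\varphi'(0)=\varphi'(1)=0$; equivalently $\lambda(s)=\min\{\int_0^1 r^{d-1}e^{2sm}(|\varphi'|^2+c\varphi^2)dr:\ \varphi\in H^1((0,1)),\ \int_0^1 r^{d-1}e^{2sm}\varphi^2dr=1\}$. $\lambda^{\mathcal{D}}$ (resp. $\lambda^{\mathcal{N}}$) is the principal eigenvalue of $-\varphi''-\frac{d-1}{r}\varphi'+c\varphi=\lambda\varphi$ on $(a,b)$ with Dirichlet (resp. Neumann) boundary conditions, i.e. the minimum of $\int_a^b r^{d-1}(|\varphi'|^2+c\varphi^2)dr$ over $\varphi\in H^1_0((a,b))$ (resp. $H^1((a,b))$) with $\int_a^b r^{d-1}\varphi^2dr=1$. (H1): $m(r)=m(1-r)$ on $[0,1]$ and $m\equiv0$ on $[a,b]$, where $a+b=1$. (H2): $c>0$ on $[0,1]$ and $c(r)>\lambda^{\mathcal{D}}$ for $r\in[0,a]\cup[b,1]$. Step function $\bar m$: given $\delta\in(0,a)$, constants $0<h<\alpha<\beta<1<\nu$ and $l\in\mathbb{N}$ with $\sum_{i\ge1}(\alpha^{i+l}+\beta^{i+l})=a-\delta$,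 put $Y_0=\delta$, $Y_n=\delta+\sum_{i=1}^n(\alpha^{i+l}+\beta^{i+l})$ and $X_n=Y_n-\beta^{n+l}$ for $n\ge1$; define $\bar m(r)=h^n$ on $[Y_{n-1},X_n]$ and $\bar m(r)=-\nu h^n$ on $[X_n,Y_n]$ for $n\ge1$, and $\bar m(r)=\bar m(1-r)$ for $r\in[b,1-\delta]$. $S_{\mathcal{N}}$: the set of $m\in C^1([0,1])$ such that, for some such $\delta,h,\alpha,\beta,\nu,l$, $m'$ changes sign only finitely many times in $[0,\delta)\cup(1-\delta,1]$ and $m(r)\le\bar m(r)$ for all $r\in[\delta,a]\cup[b,1-\delta]$. *)

theory Defs
  imports "HOL-Analysis.Analysis"
begin

text \<open>One-dimensional H^1 on [u,v]: phi is (the absolutely continuous representative of)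
  an H^1 function with weak derivative g in L^2((u,v)).\<close>
definition H1_pair :: "real \<Rightarrow> real \<Rightarrow> (real \<Rightarrow> real) \<Rightarrow> (real \<Rightarrow> real) \<Rightarrow> bool" where
  "H1_pair u v phi g \<longleftrightarrow>
     set_integrable lborel {u..v} g \<and>
     set_integrable lborel {u..v} (\<lambda>x. (g x)^2) \<and>
     (\<forall>x\<in>{u..v}. phi x = phi u + (LINT t:{u..x}|lborel. g t))"

text \<open>Values of the weighted Rayleigh quotient over admissible normalized functions
  (P encodes boundary conditions, e.g. Dirichlet).\<close>
definition rayleigh_values ::
  "real \<Rightarrow> real \<Rightarrow> (real \<Rightarrow> real) \<Rightarrow> (real \<Rightarrow> real) \<Rightarrow> ((real \<Rightarrow> real) \<Rightarrow> bool) \<Rightarrow> real set" where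
  "rayleigh_values u v w c P =
     {LINT r:{u..v}|lborel. w r * ((g r)^2 + c r * (phi r)^2) | phi g.
        H1_pair u v phi g \<and> P phi \<and> (LINT r:{u..v}|lborel. w r * (phi r)^2) = 1}"

text \<open>lambda(s): principal eigenvalue with drift, via its variational characterization.\<close>
definition lam :: "nat \<Rightarrow> (real \<Rightarrow> real) \<Rightarrow> (real \<Rightarrow> real) \<Rightarrow> real \<Rightarrow> real" where
  "lam d m c s = Inf (rayleigh_values 0 1 (\<lambda>r. r^(d-1) * exp (2 * s * m r)) c (\<lambda>_. True))"

definition lamD :: "nat \<Rightarrow> (real \<Rightarrow> real) \<Rightarrow> real \<Rightarrow> real \<Rightarrow> real" where
  "lamD d c a b = Inf (rayleigh_values a b (\<lambda>r. r^(d-1)) c (\<lambda>phi. phi a = 0 \<and> phi b = 0))"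

definition lamN :: "nat \<Rightarrow> (real \<Rightarrow> real) \<Rightarrow> real \<Rightarrow> real \<Rightarrow> real" where
  "lamN d c a b = Inf (rayleigh_values a b (\<lambda>r. r^(d-1)) c (\<lambda>_. True))"

definition finite_sign_changes :: "(real \<Rightarrow> real) \<Rightarrow> real \<Rightarrow> real \<Rightarrow> bool" where
  "finite_sign_changes f u v \<longleftrightarrow>
     (\<exists>xs. xs \<noteq> [] \<and> sorted xs \<and> hd xs = u \<and> last xs = v \<and>
        (\<forall>i. Suc i < length xs \<longrightarrow>
           (\<forall>x\<in>{xs!i..xs!(Suc i)}. f x \<ge> 0) \<or> (\<forall>x\<in>{xs!i..xs!(Suc i)}. f x \<le> 0)))"

definition stepY :: "real \<Rightarrow> real \<Rightarrow> real \<Rightarrow> nat \<Rightarrow> nat \<Rightarrow> real" where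
  "stepY \<delta> \<alpha> \<beta> l n = \<delta> + (\<Sum>i=1..n. \<alpha>^(i+l) + \<beta>^(i+l))"

definition stepX :: "real \<Rightarrow> real \<Rightarrow> real \<Rightarrow> nat \<Rightarrow> nat \<Rightarrow> real" where
  "stepX \<delta> \<alpha> \<beta> l n = stepY \<delta> \<alpha> \<beta> l n - \<beta>^(n+l)"

text \<open>m \<le> mbar on [delta,a) and on (b,1-delta], where mbar = h^n on [Y_(n-1),X_n],
  mbar = -nu h^n on [X_n,Y_n], extended symmetrically by mbar(r) = mbar(1-r).\<close>
definition below_step :: "(real \<Rightarrow> real) \<Rightarrow> real \<Rightarrow> real \<Rightarrow> real \<Rightarrow> real \<Rightarrow> real \<Rightarrow> nat \<Rightarrow> bool" where
  "below_step m \<delta> h \<alpha> \<beta> \<nu> l \<longleftrightarrow>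
     (\<forall>n\<ge>1. (\<forall>r\<in>{stepY \<delta> \<alpha> \<beta> l (n-1)..stepX \<delta> \<alpha> \<beta> l n}. m r \<le> h^n \<and> m (1-r) \<le> h^n) \<and>
             (\<forall>r\<in>{stepX \<delta> \<alpha> \<beta> l n..stepY \<delta> \<alpha> \<beta> l n}. m r \<le> -\<nu>*h^n \<and> m (1-r) \<le> -\<nu>*h^n))"

definition in_SN :: "real \<Rightarrow> (real \<Rightarrow> real) \<Rightarrow> (real \<Rightarrow> real) \<Rightarrow> bool" where
  "in_SN a m m' \<longleftrightarrow>
     (\<exists>\<delta> h \<alpha> \<beta> \<nu> (l::nat).
        0 < \<delta> \<and> \<delta> < a \<and> 0 < h \<and> h < \<alpha> \<and> \<alpha> < \<beta> \<and> \<beta> < 1 \<and> 1 < \<nu> \<and>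
        ((\<lambda>i. \<alpha>^(Suc i + l) + \<beta>^(Suc i + l)) sums (a - \<delta>)) \<and>
        finite_sign_changes m' 0 \<delta> \<and> finite_sign_changes m' (1-\<delta>) 1 \<and>
        below_step m \<delta> h \<alpha> \<beta> \<nu> l)"

end

theory Submission
  imports Defs
begin

text \<open>Take a near-minimiser psi of the Neumann problem on [a,b] and extend it to [0,1]: constant
  psi(a), psi(b) on the plateaus [Y_n,a] and [b,1-Y_n], linear ramps of width beta^(n+l) on
  [X_n,Y_n] and on its mirror image, and zero near the boundary. Since m = 0 on [a,b], the
  Rayleigh quotient of the extension for the weight r^(d-1) exp(2 s m) exceeds that of psi by at
  most a constant times exp(-2 s nu h^n) / beta^(n+l) (the ramps, where m <= -nu h^n) plus
  exp(2 s h^(n+1)) beta^(n+l) (the plateaus, where m <= h^(n+1) and whose length is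
  O(beta^(n+l))). For large s one can choose n with s h^n close to n |ln beta| / (1 + nu); then
  both terms are exponentially small in n, and n tends to infinity with s.\<close>

section \<open>H^1 functions on an interval as primitives\<close>

definition primitive_on :: "real \<Rightarrow> real \<Rightarrow> (real \<Rightarrow> real) \<Rightarrow> (real \<Rightarrow> real) \<Rightarrow> bool" where
  "primitive_on u v phi g \<longleftrightarrow>
     g integrable_on {u..v} \<and> (\<forall>x\<in>{u..v}. phi x = phi u + integral {u..x} g)"

lemma primitive_on_affine:
  assumes "u \<le> v" "\<And>y. u < y \<Longrightarrow> y < v \<Longrightarrow> g y = k"
    "\<And>x. x \<in> {u..v} \<Longrightarrow> phi x = phi u + k * (x - u)"
  shows "primitive_on u v phi g"
  unfolding primitive_on_def
proof
  show "g integrable_on {u..v}"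
    by (rule integrable_spike[where S="{u,v}" and f="\<lambda>_. k"]) (auto intro: assms(2))
  show "\<forall>x\<in>{u..v}. phi x = phi u + integral {u..x} g"
  proof
    fix x assume x: "x \<in> {u..v}"
    have "integral {u..x} g = integral {u..x} (\<lambda>_. k)"
      by (rule integral_spike[where S="{u,x}"]) (use x assms(2) in force)+
    then show "phi x = phi u + integral {u..x} g"
      using x assms(3)[OF x] by simp
  qed
qed

lemma primitive_on_cong:
  assumes "primitive_on u v psi g0" "\<And>y. u < y \<Longrightarrow> y \<le> v \<Longrightarrow> g y = g0 y"
    "\<And>x. x \<in> {u..v} \<Longrightarrow> phi x = psi x"
  shows "primitive_on u v phi g"
  unfolding primitive_on_def
proof
  have spike: "g0 y = g y" if "y \<in> {u..v} - {u}" for y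
    using that assms(2)[of y] by auto
  show "g integrable_on {u..v}"
    by (rule integrable_spike[where S="{u}" and f="g0"])
      (use assms(1) spike in \<open>auto simp: primitive_on_def\<close>)
  show "\<forall>x\<in>{u..v}. phi x = phi u + integral {u..x} g"
  proof
    fix x assume x: "x \<in> {u..v}"
    have "integral {u..x} g = integral {u..x} g0"
    proof (rule integral_spike[where S="{u}"])
      show "g0 y = g y" if "y \<in> {u..x} - {u}" for y
        using that x spike by auto
    qed simp
    moreover have "psi x = psi u + integral {u..x} g0"
      using assms(1) x unfolding primitive_on_def by blast
    ultimately show "phi x = phi u + integral {u..x} g"
      using assms(3)[of x] assms(3)[of u] x by simp
  qed
qed

lemma primitive_on_combine:
  assumes "primitive_on u v phi g" "primitive_on v w phi g" "u \<le> v" "v \<le> w"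
  shows "primitive_on u w phi g"
  unfolding primitive_on_def
proof
  have gu: "g integrable_on {u..v}" and phi_u: "\<forall>x\<in>{u..v}. phi x = phi u + integral {u..x} g"
    and gw: "g integrable_on {v..w}" and phi_v: "\<forall>x\<in>{v..w}. phi x = phi v + integral {v..x} g"
    using assms(1,2) unfolding primitive_on_def by blast+
  show g: "g integrable_on {u..w}"
    using Henstock_Kurzweil_Integration.integrable_combine[OF assms(3,4) gu gw] .
  show "\<forall>x\<in>{u..w}. phi x = phi u + integral {u..x} g"
  proof
    fix x assume x: "x \<in> {u..w}"
    show "phi x = phi u + integral {u..x} g"
    proof (cases "x \<le> v")
      case True
      then have "x \<in> {u..v}" using x by simp
      then show ?thesis using phi_u by blast
    next
      case False
      then have "x \<in> {v..w}" "v \<in> {u..v}"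
        using x assms(3) by auto
      then have "phi x = phi v + integral {v..x} g" "phi v = phi u + integral {u..v} g"
        using phi_u phi_v by blast+
      moreover have "integral {u..v} g + integral {v..x} g = integral {u..x} g"
        by (rule Henstock_Kurzweil_Integration.integral_combine)
          (use False x assms(3) in \<open>auto intro: integrable_on_subinterval[OF g]\<close>)
      ultimately show ?thesis by linarith
    qed
  qed
qed

lemma H1_pair_imp_primitive_on:
  assumes "H1_pair u v phi g"
  shows "primitive_on u v phi g"
  unfolding primitive_on_def
proof
  have g: "set_integrable lborel {u..v} g"
    using assms unfolding H1_pair_def by blast
  show "g integrable_on {u..v}"
    using set_borel_integral_eq_integral(1)[OF g] .
  show "\<forall>x\<in>{u..v}. phi x = phi u + integral {u..x} g"
  proof
    fix x assume x: "x \<in> {u..v}"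
    have "set_integrable lborel {u..x} g"
      by (rule set_integrable_subset[OF g]) (use x in auto)
    then show "phi x = phi u + integral {u..x} g"
      using assms x set_borel_integral_eq_integral(2) unfolding H1_pair_def by metis
  qed
qed

lemma H1_pairI:
  assumes "set_integrable lborel {u..v} g" "set_integrable lborel {u..v} (\<lambda>x. (g x)^2)"
    "primitive_on u v phi g"
  shows "H1_pair u v phi g"
  unfolding H1_pair_def
proof (intro conjI assms(1,2) ballI)
  fix x assume x: "x \<in> {u..v}"
  have "set_integrable lborel {u..x} g"
    by (rule set_integrable_subset[OF assms(1)]) (use x in auto)
  then show "phi x = phi u + (LINT t:{u..x}|lborel. g t)"
    using assms(3) x set_borel_integral_eq_integral(2) unfolding primitive_on_def by metis
qed

lemma H1_pair_continuous_on:
  assumes "H1_pair u v phi g"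
  shows "continuous_on {u..v} phi"
proof -
  have "g integrable_on {u..v}" and phi: "\<forall>x\<in>{u..v}. phi x = phi u + integral {u..x} g"
    using H1_pair_imp_primitive_on[OF assms] unfolding primitive_on_def by blast+
  then have "continuous_on {u..v} (\<lambda>x. phi u + integral {u..x} g)"
    by (intro continuous_intros indefinite_integral_continuous_1)
  then show ?thesis
    using phi by (metis (no_types, lifting) continuous_on_cong)
qed

lemma H1_pair_scale:
  assumes "H1_pair u v phi g"
  shows "H1_pair u v (\<lambda>x. k * phi x) (\<lambda>x. k * g x)"
proof -
  have g: "set_integrable lborel {u..v} g" and g2: "set_integrable lborel {u..v} (\<lambda>x. (g x)^2)"
    and phi: "\<forall>x\<in>{u..v}. phi x = phi u + (LINT t:{u..x}|lborel. g t)"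
    using assms unfolding H1_pair_def by blast+
  have "set_integrable lborel {u..v} (\<lambda>x. (k * g x)^2)"
    using g2 by (simp add: power_mult_distrib)
  moreover have "k * phi x = k * phi u + (LINT t:{u..x}|lborel. k * g t)" if "x \<in> {u..v}" for x
    using phi that by (metis distrib_left set_integral_mult_right)
  ultimately show ?thesis
    using g unfolding H1_pair_def by blast
qed

lemma set_integrable_indicator_mult_iff:
  fixes f :: "'a \<Rightarrow> real"
  assumes "S \<subseteq> T"
  shows "set_integrable M T (\<lambda>x. indicator S x * f x) \<longleftrightarrow> set_integrable M S f"
  unfolding set_integrable_def using assms
  by (intro arg_cong[where f="integrable M"] ext) (auto split: split_indicator)

lemma set_integral_indicator_mult:
  fixes f :: "'a \<Rightarrow> real"
  assumes "S \<subseteq> T"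
  shows "(LINT x:T|M. indicator S x * f x) = (LINT x:S|M. f x)"
  unfolding set_lebesgue_integral_def using assms
  by (intro Bochner_Integration.integral_cong) (auto split: split_indicator)

lemma set_integrable_interval_indicator:
  fixes u v K :: real
  assumes "A \<in> sets lborel"
  shows "set_integrable lborel A (\<lambda>x. indicator {u<..v} x * K)"
proof -
  have "emeasure lborel {u<..v} \<le> emeasure lborel {u..v}"
    by (rule emeasure_mono) auto
  then have "emeasure lborel {u<..v} < \<infinity>"
    by (simp add: emeasure_lborel_Icc_eq order.strict_trans1)
  then show ?thesis
    unfolding set_integrable_def using assms
    by (intro integrable_mult_indicator integrable_mult_left integrable_real_indicator) auto
qed

lemma set_integral_nonneg:
  fixes f :: "'a \<Rightarrow> real"
  assumes "\<And>x. x \<in> A \<Longrightarrow> 0 \<le> f x"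
  shows "0 \<le> (LINT x:A|M. f x)"
  unfolding set_lebesgue_integral_def
  by (rule Bochner_Integration.integral_nonneg) (use assms in \<open>simp add: indicator_def\<close>)

lemma H1_energy_integrable:
  assumes psi: "H1_pair a b psi g0" and "continuous_on {a..b} \<omega>" "continuous_on {a..b} c"
  shows "set_integrable lborel {a..b} (\<lambda>r. \<omega> r * ((g0 r)^2 + c r * (psi r)^2))"
proof -
  have g0: "set_integrable lborel {a..b} (\<lambda>r. (g0 r)^2)"
    using psi unfolding H1_pair_def by blast
  obtain K where K: "\<forall>r\<in>{a..b}. norm (\<omega> r) \<le> K"
    using compact_imp_bounded[OF compact_continuous_image[OF \<open>continuous_on {a..b} \<omega>\<close>]]
    unfolding bounded_iff by auto
  have "(\<lambda>r. indicator {a..b} r *\<^sub>R \<omega> r) \<in> borel_measurable lborel"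
    using borel_measurable_continuous_on_indicator[OF _ \<open>continuous_on {a..b} \<omega>\<close>] by simp
  moreover have "(\<lambda>r. indicator {a..b} r *\<^sub>R (g0 r)^2) \<in> borel_measurable lborel"
    using g0 unfolding set_integrable_def by (rule borel_measurable_integrable)
  ultimately have "(\<lambda>r. (indicator {a..b} r *\<^sub>R \<omega> r) * (indicator {a..b} r *\<^sub>R (g0 r)^2))
      \<in> borel_measurable lborel"
    by (rule borel_measurable_times)
  moreover have "(\<lambda>r. (indicator {a..b} r *\<^sub>R \<omega> r) * (indicator {a..b} r *\<^sub>R (g0 r)^2))
      = (\<lambda>r. indicator {a..b} r *\<^sub>R (\<omega> r * (g0 r)^2))"
    by (auto simp: indicator_def)
  ultimately have "set_borel_measurable lborel {a..b} (\<lambda>r. \<omega> r * (g0 r)^2)"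
    unfolding set_borel_measurable_def by simp
  then have "set_integrable lborel {a..b} (\<lambda>r. \<omega> r * (g0 r)^2)"
  proof (rule set_integrable_bound[OF set_integrable_mult_right[OF g0, of K]])
    have "\<bar>\<omega> r\<bar> * (g0 r)^2 \<le> \<bar>K\<bar> * (g0 r)^2" if "r \<in> {a..b}" for r
      using K that by (intro mult_right_mono) (auto intro: order.trans[OF _ abs_ge_self])
    then show "AE r in lborel. r \<in> {a..b} \<longrightarrow> norm (\<omega> r * (g0 r)^2) \<le> norm (K * (g0 r)^2)"
      by (simp add: abs_mult)
  qed
  moreover have "set_integrable lborel {a..b} (\<lambda>r. \<omega> r * (c r * (psi r)^2))"
    unfolding set_integrable_def
    by (rule borel_integrable_compact)
      (auto intro!: continuous_intros H1_pair_continuous_on[OF psi] assms(2,3))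
  ultimately show ?thesis
    by (simp add: distrib_left)
qed

section \<open>The ramp extension of a function on [a,b]\<close>

definition ramp_extension :: "real \<Rightarrow> real \<Rightarrow> real \<Rightarrow> real \<Rightarrow> (real \<Rightarrow> real) \<Rightarrow> real \<Rightarrow> real" where
  "ramp_extension X Y a b psi x =
     (if x \<le> X then 0 else if x \<le> Y then psi a * (x - X) / (Y - X)
      else if x \<le> a then psi a else if x \<le> b then psi x else if x \<le> 1 - Y then psi b
      else if x \<le> 1 - X then psi b * (1 - X - x) / (Y - X) else 0)"

definition ramp_extension_deriv ::
  "real \<Rightarrow> real \<Rightarrow> real \<Rightarrow> real \<Rightarrow> (real \<Rightarrow> real) \<Rightarrow> (real \<Rightarrow> real) \<Rightarrow> real \<Rightarrow> real" where
  "ramp_extension_deriv X Y a b psi g0 x =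
     indicator {X<..Y} x * (psi a / (Y - X)) + indicator {a<..b} x * g0 x
     - indicator {1-Y<..1-X} x * (psi b / (Y - X))"

lemma ramp_extension_deriv_integrable:
  assumes "0 \<le> X" "X < Y" "Y \<le> a" "a < b" "b \<le> 1 - Y" and psi: "H1_pair a b psi g0"
  shows "set_integrable lborel {0..1} (ramp_extension_deriv X Y a b psi g0)"
    and "set_integrable lborel {0..1} (\<lambda>x. (ramp_extension_deriv X Y a b psi g0 x)^2)"
proof -
  have "set_integrable lborel {a<..b} g0" "set_integrable lborel {a<..b} (\<lambda>x. (g0 x)^2)"
    using psi unfolding H1_pair_def by (auto intro: set_integrable_subset)
  moreover have "{a<..b} \<subseteq> {0..1}"
    using assms by auto
  ultimately have g0: "set_integrable lborel {0..1} (\<lambda>x. indicator {a<..b} x * g0 x)"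
    "set_integrable lborel {0..1} (\<lambda>x. indicator {a<..b} x * (g0 x)^2)"
    by (simp_all add: set_integrable_indicator_mult_iff)
  then show "set_integrable lborel {0..1} (ramp_extension_deriv X Y a b psi g0)"
    unfolding ramp_extension_deriv_def
    by (intro set_integral_add(1) set_integral_diff(1) set_integrable_interval_indicator) auto
  have "(\<lambda>x. (ramp_extension_deriv X Y a b psi g0 x)^2) = (\<lambda>x. indicator {X<..Y} x * (psi a / (Y - X))^2
      + indicator {a<..b} x * (g0 x)^2 + indicator {1-Y<..1-X} x * (psi b / (Y - X))^2)"
    using assms
    by (intro ext) (auto simp: ramp_extension_deriv_def power2_eq_square split: split_indicator)
  then show "set_integrable lborel {0..1} (\<lambda>x. (ramp_extension_deriv X Y a b psi g0 x)^2)"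
    using g0 by (simp add: set_integrable_interval_indicator)
qed

lemma H1_pair_ramp_extension:
  assumes "0 \<le> X" "X < Y" "Y \<le> a" "a < b" "b \<le> 1 - Y" and psi: "H1_pair a b psi g0"
  shows "H1_pair 0 1 (ramp_extension X Y a b psi) (ramp_extension_deriv X Y a b psi g0)"
proof -
  define phi where "phi = ramp_extension X Y a b psi"
  define g where "g = ramp_extension_deriv X Y a b psi g0"
  note defs = phi_def g_def ramp_extension_def ramp_extension_deriv_def
  have "primitive_on 0 X phi g"
    by (rule primitive_on_affine[where k=0]) (use assms in \<open>auto simp: defs\<close>)
  moreover have "primitive_on X Y phi g"
    by (rule primitive_on_affine[where k="psi a / (Y - X)"]) (use assms in \<open>auto simp: defs\<close>)
  ultimately have "primitive_on 0 Y phi g"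
    by (rule primitive_on_combine) (use assms in linarith)+
  moreover have "primitive_on Y a phi g"
    by (rule primitive_on_affine[where k=0]) (use assms in \<open>auto simp: defs\<close>)
  ultimately have "primitive_on 0 a phi g"
    by (rule primitive_on_combine) (use assms in linarith)+
  moreover have "primitive_on a b phi g"
    by (rule primitive_on_cong[OF H1_pair_imp_primitive_on[OF psi]])
      (use assms in \<open>auto simp: defs\<close>)
  ultimately have "primitive_on 0 b phi g"
    by (rule primitive_on_combine) (use assms in linarith)+
  moreover have "primitive_on b (1 - Y) phi g"
    by (rule primitive_on_affine[where k=0]) (use assms in \<open>auto simp: defs\<close>)
  ultimately have "primitive_on 0 (1 - Y) phi g"
    by (rule primitive_on_combine) (use assms in linarith)+
  moreover have "primitive_on (1 - Y) (1 - X) phi g"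
  proof (rule primitive_on_affine[where k="- psi b / (Y - X)"])
    have "phi (1 - Y) = psi b"
      using assms by (cases "b = 1 - Y") (auto simp: defs)
    then show "phi x = phi (1 - Y) + - psi b / (Y - X) * (x - (1 - Y))"
      if "x \<in> {1 - Y..1 - X}" for x
      using that assms by (cases "x = 1 - Y") (simp, auto simp: defs field_simps)
  qed (use assms in \<open>auto simp: defs\<close>)
  ultimately have "primitive_on 0 (1 - X) phi g"
    by (rule primitive_on_combine) (use assms in linarith)+
  moreover have "primitive_on (1 - X) 1 phi g"
    by (rule primitive_on_affine[where k=0]) (use assms in \<open>auto simp: defs\<close>)
  ultimately have "primitive_on 0 1 phi g"
    by (rule primitive_on_combine) (use assms in linarith)+
  then show ?thesis
    unfolding phi_def g_def using ramp_extension_deriv_integrable[OF assms] by (intro H1_pairI)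
qed

lemma ramp_extension_eq_inner:
  assumes "X < Y" "Y \<le> a" "a \<le> r" "r \<le> b"
  shows "ramp_extension X Y a b psi r = psi r"
  using assms by (cases "r = a") (auto simp: ramp_extension_def)

lemma ramp_extension_on_ramp:
  assumes "X < Y" "Y \<le> a" "a < b" "b \<le> 1 - Y"
    and r: "X < r \<and> r \<le> Y \<or> b < r \<and> 1 - Y \<le> r \<and> r \<le> 1 - X"
  shows "(ramp_extension_deriv X Y a b psi g0 r)^2 \<le> ((psi a)^2 + (psi b)^2) / (Y - X)^2"
    and "(ramp_extension X Y a b psi r)^2 \<le> (psi a)^2 + (psi b)^2"
proof -
  note defs = ramp_extension_def ramp_extension_deriv_def
  obtain p q where phi: "ramp_extension X Y a b psi r = p * q"
    and g: "(ramp_extension_deriv X Y a b psi g0 r)^2 \<le> p^2 / (Y - X)^2"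
    and q: "0 \<le> q" "q \<le> 1" and p: "p^2 \<le> (psi a)^2 + (psi b)^2"
    using r
  proof (elim disjE conjE)
    assume "X < r" "r \<le> Y"
    then show thesis
      using assms by (intro that[of "psi a" "(r - X) / (Y - X)"]) (simp_all add: defs indicator_def power_divide)
  next
    assume "b < r" "1 - Y \<le> r" "r \<le> 1 - X"
    then show thesis
      using assms by (intro that[of "psi b" "(1 - X - r) / (Y - X)"])
        (cases "r = 1 - Y"; simp add: defs indicator_def power_divide)+
  qed
  show "(ramp_extension_deriv X Y a b psi g0 r)^2 \<le> ((psi a)^2 + (psi b)^2) / (Y - X)^2"
    using order.trans[OF g divide_right_mono[OF p zero_le_power2]] .
  have "(p * q)^2 \<le> p^2"
    using q by (simp add: power_mult_distrib mult_left_le power_le_one)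
  then show "(ramp_extension X Y a b psi r)^2 \<le> (psi a)^2 + (psi b)^2"
    unfolding phi using p by linarith
qed

lemma ramp_extension_cases:
  assumes "X < Y" "Y \<le> a" "a < b" "b \<le> 1 - Y"
  obtains (ramp) "r \<in> {X..Y} \<union> {1-Y..1-X}"
      "(ramp_extension_deriv X Y a b psi g0 r)^2 \<le> ((psi a)^2 + (psi b)^2) / (Y - X)^2"
      "(ramp_extension X Y a b psi r)^2 \<le> (psi a)^2 + (psi b)^2"
  | (plateau) "r \<in> {Y..a} \<union> {b..1-Y}" "ramp_extension_deriv X Y a b psi g0 r = 0"
      "(ramp_extension X Y a b psi r)^2 \<le> (psi a)^2 + (psi b)^2"
  | (inner) "r \<in> {a..b}" "ramp_extension X Y a b psi r = psi r"
      "(ramp_extension_deriv X Y a b psi g0 r)^2 \<le> (g0 r)^2"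
  | (outer) "ramp_extension X Y a b psi r = 0" "ramp_extension_deriv X Y a b psi g0 r = 0"
proof -
  note defs = ramp_extension_def ramp_extension_deriv_def
  consider "r \<le> X \<or> 1 - X < r" | "X < r \<and> r \<le> Y \<or> b < r \<and> 1 - Y \<le> r \<and> r \<le> 1 - X"
    | "Y < r \<and> r < a \<or> b < r \<and> r < 1 - Y" | "Y < r" "a \<le> r" "r \<le> b"
    by (meson linorder_not_le)
  then show thesis
  proof cases
    case 1
    then have "ramp_extension X Y a b psi r = 0" "ramp_extension_deriv X Y a b psi g0 r = 0"
      using assms by (auto simp: defs indicator_def)
    then show thesis by (rule outer)
  next
    case 2
    then show thesis
      using ramp_extension_on_ramp[OF assms 2] by (intro ramp) auto
  next
    case 3
    then have "ramp_extension_deriv X Y a b psi g0 r = 0"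
      "ramp_extension X Y a b psi r = psi a \<or> ramp_extension X Y a b psi r = psi b"
      using assms by (auto simp: defs indicator_def)
    then show thesis
      using 3 by (intro plateau) auto
  next
    case 4
    moreover have "ramp_extension_deriv X Y a b psi g0 r = indicator {a<..b} r * g0 r"
      using 4 assms by (simp add: defs indicator_def)
    ultimately show thesis
      using ramp_extension_eq_inner[OF assms(1,2)] by (intro inner) (auto simp: indicator_def)
  qed
qed

definition ramp_majorant ::
  "real \<Rightarrow> real \<Rightarrow> real \<Rightarrow> real \<Rightarrow> (real \<Rightarrow> real) \<Rightarrow> real \<Rightarrow> real \<Rightarrow> real \<Rightarrow> real" where
  "ramp_majorant X Y a b V K1 K2 r = indicator {a..b} r * V r
     + K1 * (indicator {X..Y} r + indicator {1-Y..1-X} r)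
     + K2 * (indicator {Y..a} r + indicator {b..1-Y} r)"

lemma ramp_majorant_ge:
  assumes "0 \<le> K1" "0 \<le> K2" "r \<in> {a..b} \<Longrightarrow> 0 \<le> V r"
  shows "0 \<le> ramp_majorant X Y a b V K1 K2 r"
    and "r \<in> {X..Y} \<union> {1-Y..1-X} \<Longrightarrow> K1 \<le> ramp_majorant X Y a b V K1 K2 r"
    and "r \<in> {Y..a} \<union> {b..1-Y} \<Longrightarrow> K2 \<le> ramp_majorant X Y a b V K1 K2 r"
    and "r \<in> {a..b} \<Longrightarrow> V r \<le> ramp_majorant X Y a b V K1 K2 r"
proof -
  have terms: "0 \<le> indicator {a..b} r * V r" "0 \<le> K1 * (indicator {X..Y} r + indicator {1-Y..1-X} r)"
    "0 \<le> K2 * (indicator {Y..a} r + indicator {b..1-Y} r)"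
    using assms by (simp_all add: indicator_def)
  then show "0 \<le> ramp_majorant X Y a b V K1 K2 r"
    unfolding ramp_majorant_def by linarith
  show "K1 \<le> ramp_majorant X Y a b V K1 K2 r" if "r \<in> {X..Y} \<union> {1-Y..1-X}"
  proof -
    have "K1 \<le> K1 * (indicator {X..Y} r + indicator {1-Y..1-X} r)"
      using that assms(1) by (auto simp: indicator_def)
    then show ?thesis
      using terms unfolding ramp_majorant_def by linarith
  qed
  show "K2 \<le> ramp_majorant X Y a b V K1 K2 r" if "r \<in> {Y..a} \<union> {b..1-Y}"
  proof -
    have "K2 \<le> K2 * (indicator {Y..a} r + indicator {b..1-Y} r)"
      using that assms(2) by (auto simp: indicator_def)
    then show ?thesis
      using terms unfolding ramp_majorant_def by linarith
  qed
  show "V r \<le> ramp_majorant X Y a b V K1 K2 r" if "r \<in> {a..b}"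
    using that terms unfolding ramp_majorant_def by simp
qed

lemma ramp_majorant_integral:
  assumes "X \<le> Y" "Y \<le> a" "b \<le> 1 - Y" and V: "set_integrable lborel {a..b} V"
  shows "integrable lborel (ramp_majorant X Y a b V K1 K2)"
    and "integral\<^sup>L lborel (ramp_majorant X Y a b V K1 K2)
      = (LINT r:{a..b}|lborel. V r) + K1 * (2 * (Y - X)) + K2 * ((a - Y) + (1 - Y - b))"
proof -
  have ind: "integrable lborel (indicator {u..v} :: real \<Rightarrow> real)" for u v :: real
    by (intro integrable_real_indicator) (auto simp: emeasure_lborel_Icc_eq)
  have V': "integrable lborel (\<lambda>r. indicator {a..b} r * V r)"
    using V unfolding set_integrable_def by simp
  show "integrable lborel (ramp_majorant X Y a b V K1 K2)"
    unfolding ramp_majorant_def[abs_def]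
    by (intro Bochner_Integration.integrable_add integrable_mult_right ind V')
  have "integral\<^sup>L lborel (ramp_majorant X Y a b V K1 K2) = (\<integral>r. indicator {a..b} r * V r \<partial>lborel)
      + K1 * (measure lborel {X..Y} + measure lborel {1-Y..1-X})
      + K2 * (measure lborel {Y..a} + measure lborel {b..1-Y})"
    unfolding ramp_majorant_def[abs_def] by (simp add: ind V' Bochner_Integration.integral_add)
  then show "integral\<^sup>L lborel (ramp_majorant X Y a b V K1 K2)
      = (LINT r:{a..b}|lborel. V r) + K1 * (2 * (Y - X)) + K2 * ((a - Y) + (1 - Y - b))"
    using assms by (simp add: set_lebesgue_integral_def)
qed

lemma weighted_energy_mono:
  fixes w e c C G G' \<Phi> \<Phi>' :: real
  assumes "0 \<le> w" "w \<le> e" "0 \<le> c" "c \<le> C" "0 \<le> G" "G \<le> G'" "0 \<le> \<Phi>" "\<Phi> \<le> \<Phi>'"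
  shows "w * (G + c * \<Phi>) \<le> e * (G' + C * \<Phi>')"
proof -
  have "c * \<Phi> \<le> C * \<Phi>'"
    using assms by (intro mult_mono) auto
  then have "G + c * \<Phi> \<le> G' + C * \<Phi>'"
    using assms by linarith
  then show ?thesis
    using assms by (intro mult_mono) auto
qed

lemma ramp_extension_energy_density_le:
  fixes w \<omega> c psi g0 :: "real \<Rightarrow> real"
  assumes ord: "X < Y" "Y \<le> a" "a < b" "b \<le> 1 - Y" "Y - X \<le> 1"
    and wc: "0 \<le> w r" "0 \<le> c r" "c r \<le> C"
    and e: "r \<in> {X..Y} \<union> {1-Y..1-X} \<Longrightarrow> w r \<le> e1" "r \<in> {Y..a} \<union> {b..1-Y} \<Longrightarrow> w r \<le> e2"
      "0 \<le> e1" "0 \<le> e2"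
    and \<omega>: "r \<in> {a..b} \<Longrightarrow> w r = \<omega> r"
  defines "P \<equiv> (psi a)^2 + (psi b)^2"
  shows "w r * ((ramp_extension_deriv X Y a b psi g0 r)^2 + c r * (ramp_extension X Y a b psi r)^2)
    \<le> ramp_majorant X Y a b (\<lambda>r. \<omega> r * ((g0 r)^2 + c r * (psi r)^2))
         (e1 * P * (1 + C) / (Y - X)^2) (e2 * P * (1 + C)) r"
    (is "?f \<le> ?F")
proof -
  let ?V = "\<lambda>r. \<omega> r * ((g0 r)^2 + c r * (psi r)^2)"
  define B where "B = Y - X"
  have B: "0 < B" "B \<le> 1"
    using ord by (auto simp: B_def)
  have C: "0 \<le> C" and P: "0 \<le> P"
    using wc by (simp_all add: P_def)
  have F: "0 \<le> e1 * P * (1 + C) / (Y - X)^2" "0 \<le> e2 * P * (1 + C)"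
    "r \<in> {a..b} \<Longrightarrow> 0 \<le> \<omega> r * ((g0 r)^2 + c r * (psi r)^2)"
    using e(3,4) C P wc \<omega> by simp_all
  from ramp_extension_cases[OF ord(1-4), of r psi g0, case_names ramp plateau inner outer]
  show ?thesis
  proof cases
    case ramp
    have "?f \<le> e1 * (P / B^2 + C * P)"
      using ramp e by (intro weighted_energy_mono wc) (auto simp: P_def B_def)
    also have "\<dots> \<le> e1 * (P / B^2 + C * P / B^2)"
      using B C P e(3)
      by (intro mult_left_mono add_left_mono) (auto simp: le_divide_eq power_le_one mult_left_le)
    also have "\<dots> = e1 * P * (1 + C) / (Y - X)^2"
      using B by (simp add: B_def field_simps)
    also have "\<dots> \<le> ?F"
      using ramp_majorant_ge(2)[where V="?V", OF F ramp(1)] .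
    finally show ?thesis .
  next
    case plateau
    have "?f = w r * (0 + c r * (ramp_extension X Y a b psi r)^2)"
      using plateau by simp
    also have "\<dots> \<le> e2 * (0 + C * P)"
      using plateau e by (intro weighted_energy_mono wc) (auto simp: P_def)
    also have "\<dots> \<le> e2 * P * (1 + C)"
      using e(4) P by (simp add: algebra_simps mult_left_mono)
    also have "\<dots> \<le> ?F"
      using ramp_majorant_ge(3)[where V="?V", OF F plateau(1)] .
    finally show ?thesis .
  next
    case inner
    have "?f \<le> \<omega> r * ((g0 r)^2 + c r * (psi r)^2)"
      using inner \<omega> by (intro weighted_energy_mono wc) auto
    also have "\<dots> \<le> ?F"
      using ramp_majorant_ge(4)[where V="?V", OF F inner(1)] .
    finally show ?thesis .
  next
    case outer
    then show ?thesis
      using ramp_majorant_ge(1)[where V="?V", OF F] by simp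
  qed
qed

lemma ramp_extension_energy_le:
  fixes w \<omega> c psi g0 :: "real \<Rightarrow> real"
  assumes ord: "0 \<le> X" "X < Y" "Y \<le> a" "a < b" "b \<le> 1 - Y"
    and V: "set_integrable lborel {a..b} (\<lambda>r. \<omega> r * ((g0 r)^2 + c r * (psi r)^2))"
    and w: "\<forall>r\<in>{0..1}. 0 \<le> w r" "\<forall>r\<in>{a..b}. w r = \<omega> r"
    and c: "\<forall>r\<in>{0..1}. 0 \<le> c r \<and> c r \<le> C"
    and e: "0 \<le> e1" "0 \<le> e2"
    and e1: "\<forall>r\<in>{X..Y} \<union> {1-Y..1-X}. w r \<le> e1"
    and e2: "\<forall>r\<in>{Y..a} \<union> {b..1-Y}. w r \<le> e2"
  shows "(LINT r:{0..1}|lborel. w r * ((ramp_extension_deriv X Y a b psi g0 r)^2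
            + c r * (ramp_extension X Y a b psi r)^2))
     \<le> (LINT r:{a..b}|lborel. \<omega> r * ((g0 r)^2 + c r * (psi r)^2))
       + ((psi a)^2 + (psi b)^2) * (1 + C) * (2 * e1 / (Y - X) + e2 * ((a - Y) + (1 - Y - b)))"
proof -
  define P where "P = (psi a)^2 + (psi b)^2"
  define F where "F = ramp_majorant X Y a b (\<lambda>r. \<omega> r * ((g0 r)^2 + c r * (psi r)^2))
      (e1 * P * (1 + C) / (Y - X)^2) (e2 * P * (1 + C))"
  let ?V = "\<lambda>r. \<omega> r * ((g0 r)^2 + c r * (psi r)^2)"
  have "0 \<le> C"
    using c by (meson atLeastAtMost_iff order.trans zero_le_one order.refl)
  then have K: "0 \<le> e1 * P * (1 + C) / (Y - X)^2" "0 \<le> e2 * P * (1 + C)"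
    using e by (simp_all add: P_def)
  have V0: "0 \<le> ?V r" if "r \<in> {a..b}" for r
  proof -
    have "r \<in> {0..1}"
      using that ord by auto
    then show ?thesis
      using that w c by (metis add_nonneg_nonneg mult_nonneg_nonneg zero_le_power2)
  qed
  have F0: "0 \<le> F r" for r
    unfolding F_def by (rule ramp_majorant_ge(1)[where V="?V", OF K V0])
  have F_ge: "indicator {0..1} r * (w r * ((ramp_extension_deriv X Y a b psi g0 r)^2
      + c r * (ramp_extension X Y a b psi r)^2)) \<le> F r" for r
  proof (cases "r \<in> {0..1}")
    case True
    have "w r * ((ramp_extension_deriv X Y a b psi g0 r)^2 + c r * (ramp_extension X Y a b psi r)^2)
        \<le> F r"
      unfolding F_def P_def
      by (rule ramp_extension_energy_density_le) (use ord True w c e1 e2 e in auto)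
    then show ?thesis
      using True by simp
  qed (use F0 in simp)
  have "integrable lborel F"
    unfolding F_def using ord V by (intro ramp_majorant_integral(1)) auto
  \<comment> \<open>\<open>integral_mono'\<close> needs no integrability of the smaller function: a non-integrable
    function has Bochner integral 0.\<close>
  then have "(LINT r:{0..1}|lborel. w r * ((ramp_extension_deriv X Y a b psi g0 r)^2
      + c r * (ramp_extension X Y a b psi r)^2)) \<le> integral\<^sup>L lborel F"
    unfolding set_lebesgue_integral_def using F_ge F0 by (intro integral_mono') simp_all
  also have "\<dots> = (LINT r:{a..b}|lborel. \<omega> r * ((g0 r)^2 + c r * (psi r)^2))
      + e1 * P * (1 + C) / (Y - X)^2 * (2 * (Y - X)) + e2 * P * (1 + C) * ((a - Y) + (1 - Y - b))"
    unfolding F_def using ord by (intro ramp_majorant_integral(2) V) auto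
  also have "\<dots> = (LINT r:{a..b}|lborel. \<omega> r * ((g0 r)^2 + c r * (psi r)^2))
      + P * (1 + C) * (2 * e1 / (Y - X) + e2 * ((a - Y) + (1 - Y - b)))"
  proof -
    define B where "B = Y - X"
    have "B \<noteq> 0"
      using ord by (simp add: B_def)
    then show ?thesis
      unfolding B_def[symmetric] by (simp add: field_simps power2_eq_square)
  qed
  finally show ?thesis
    unfolding P_def .
qed

section \<open>Rayleigh quotients\<close>

lemma rayleigh_values_nonneg:
  assumes "\<forall>r\<in>{u..v}. 0 \<le> w r \<and> 0 \<le> c r" "x \<in> rayleigh_values u v w c P"
  shows "0 \<le> x"
  using assms unfolding rayleigh_values_def
  by (auto intro!: set_integral_nonneg mult_nonneg_nonneg add_nonneg_nonneg)

lemma bdd_below_rayleigh_values: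
  assumes "\<forall>r\<in>{u..v}. 0 \<le> w r \<and> 0 \<le> c r"
  shows "bdd_below (rayleigh_values u v w c P)"
  using rayleigh_values_nonneg[OF assms] by (intro bdd_belowI[of _ 0]) auto

lemma Inf_rayleigh_values_le_quotient:
  assumes phi: "H1_pair u v phi g" and wc: "\<forall>r\<in>{u..v}. 0 \<le> w r \<and> 0 \<le> c r"
    and D: "0 < (LINT r:{u..v}|lborel. w r * (phi r)^2)"
  shows "Inf (rayleigh_values u v w c (\<lambda>_. True))
    \<le> (LINT r:{u..v}|lborel. w r * ((g r)^2 + c r * (phi r)^2)) / (LINT r:{u..v}|lborel. w r * (phi r)^2)"
proof -
  define D where "D = (LINT r:{u..v}|lborel. w r * (phi r)^2)"
  define k where "k = 1 / sqrt D"
  have k2: "k^2 = 1 / D"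
    using D by (simp add: k_def D_def power_divide)
  have "(\<lambda>r. w r * ((k * g r)^2 + c r * (k * phi r)^2))
      = (\<lambda>r. k^2 * (w r * ((g r)^2 + c r * (phi r)^2)))"
    by (simp add: fun_eq_iff power_mult_distrib algebra_simps)
  then have "(LINT r:{u..v}|lborel. w r * ((k * g r)^2 + c r * (k * phi r)^2))
      = k^2 * (LINT r:{u..v}|lborel. w r * ((g r)^2 + c r * (phi r)^2))"
    by simp
  moreover have "(\<lambda>r. w r * (k * phi r)^2) = (\<lambda>r. k^2 * (w r * (phi r)^2))"
    by (simp add: fun_eq_iff power_mult_distrib algebra_simps)
  then have "(LINT r:{u..v}|lborel. w r * (k * phi r)^2) = 1"
    using D k2 by (simp add: D_def)
  ultimately have "(LINT r:{u..v}|lborel. w r * ((g r)^2 + c r * (phi r)^2)) / D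
      \<in> rayleigh_values u v w c (\<lambda>_. True)"
    using H1_pair_scale[OF phi, of k] k2 unfolding rayleigh_values_def by force
  then show ?thesis
    unfolding D_def by (rule cInf_lower[OF _ bdd_below_rayleigh_values[OF wc]])
qed

lemma radial_rayleigh_values_nonempty:
  fixes a b :: real
  assumes "0 < a" "a < b"
  shows "rayleigh_values a b (\<lambda>r. r^(d-1)) c (\<lambda>_. True) \<noteq> {}"
proof -
  define I where "I = (LINT r:{a..b}|lborel. r^(d-1))"
  have "set_integrable lborel {a..b} (\<lambda>r. r^(d-1))"
    unfolding set_integrable_def by (rule borel_integrable_compact) (auto intro!: continuous_intros)
  then have "I = integral {a..b} (\<lambda>r. r^(d-1))"
    unfolding I_def by (rule set_borel_integral_eq_integral(2))
  also have "\<dots> \<ge> integral {a..b} (\<lambda>r. a^(d-1))"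
    by (rule integral_le)
      (use assms in \<open>auto intro!: integrable_continuous_interval continuous_intros power_mono\<close>)
  finally have "I \<ge> (b - a) * a^(d-1)"
    using assms by simp
  moreover have "(b - a) * a^(d-1) > 0"
    using assms by simp
  ultimately have I: "I > 0" by linarith
  define k where "k = 1 / sqrt I"
  have "H1_pair a b (\<lambda>_. k) (\<lambda>_. 0)"
    unfolding H1_pair_def set_integrable_def by simp
  moreover have "(LINT r:{a..b}|lborel. r^(d-1) * k^2) = 1"
    using I by (simp add: I_def k_def power_divide)
  ultimately show ?thesis
    unfolding rayleigh_values_def by force
qed

lemma lamN_near_minimizer:
  assumes "0 < a" "a < b" "\<forall>r\<in>{a..b}. 0 \<le> c r" "0 < \<epsilon>"
  obtains psi g0 where "H1_pair a b psi g0" "(LINT r:{a..b}|lborel. r^(d-1) * (psi r)^2) = 1"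
    "(LINT r:{a..b}|lborel. r^(d-1) * ((g0 r)^2 + c r * (psi r)^2)) < lamN d c a b + \<epsilon>"
proof -
  have "bdd_below (rayleigh_values a b (\<lambda>r. r^(d-1)) c (\<lambda>_. True))"
    using assms by (intro bdd_below_rayleigh_values) auto
  then obtain v where "v \<in> rayleigh_values a b (\<lambda>r. r^(d-1)) c (\<lambda>_. True)" "v < lamN d c a b + \<epsilon>"
    using cInf_less_iff[OF radial_rayleigh_values_nonempty[OF assms(1,2)]] assms(4)
    unfolding lamN_def by (metis less_add_same_cancel1)
  then show ?thesis
    using that unfolding rayleigh_values_def by blast
qed

lemma le_on_reflected_interval:
  fixes f :: "real \<Rightarrow> real"
  assumes "\<forall>r\<in>{u..v}. f r \<le> M \<and> f (1 - r) \<le> M"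
  shows "\<forall>r\<in>{u..v} \<union> {1-v..1-u}. f r \<le> M"
proof
  fix r assume "r \<in> {u..v} \<union> {1-v..1-u}"
  then have "r \<in> {u..v} \<or> 1 - r \<in> {u..v}"
    by auto
  moreover have "f (1 - (1 - r)) \<le> M" if "1 - r \<in> {u..v}"
    using assms that by blast
  ultimately show "f r \<le> M"
    using assms by auto
qed

lemma radial_weight_le:
  fixes r s M :: real
  assumes "r \<in> {0..1}" "m r \<le> M" "0 \<le> s"
  shows "r^k * exp (2 * s * m r) \<le> exp (2 * s * M)"
proof -
  have "r^k * exp (2 * s * m r) \<le> 1 * exp (2 * s * M)"
    by (rule mult_mono) (use assms in \<open>auto simp: power_le_one mult_left_mono\<close>)
  then show ?thesis by simp
qed

lemma ramp_extension_weighted_norm_ge: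
  fixes w \<omega> psi :: "real \<Rightarrow> real"
  assumes ord: "0 \<le> X" "X < Y" "Y \<le> a" "a < b" "b \<le> 1 - Y" and psi: "H1_pair a b psi g0"
    and w: "continuous_on {0..1} w" "\<forall>r\<in>{0..1}. 0 \<le> w r" "\<forall>r\<in>{a..b}. w r = \<omega> r"
    and \<omega>: "continuous_on {a..b} \<omega>"
  shows "(LINT r:{a..b}|lborel. \<omega> r * (psi r)^2)
    \<le> (LINT r:{0..1}|lborel. w r * (ramp_extension X Y a b psi r)^2)"
proof -
  have ab: "{a..b} \<subseteq> {0..1}"
    using ord by auto
  have "set_integrable lborel {a..b} (\<lambda>r. \<omega> r * (psi r)^2)"
    unfolding set_integrable_def using \<omega> H1_pair_continuous_on[OF psi]
    by (intro borel_integrable_compact) (auto intro!: continuous_intros)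
  then have "set_integrable lborel {0..1} (\<lambda>r. indicator {a..b} r * (\<omega> r * (psi r)^2))"
    using ab by (simp add: set_integrable_indicator_mult_iff)
  moreover have "set_integrable lborel {0..1} (\<lambda>r. w r * (ramp_extension X Y a b psi r)^2)"
    unfolding set_integrable_def using w(1) H1_pair_continuous_on[OF H1_pair_ramp_extension[OF ord psi]]
    by (intro borel_integrable_compact) (auto intro!: continuous_intros)
  moreover have "indicator {a..b} r * (\<omega> r * (psi r)^2) \<le> w r * (ramp_extension X Y a b psi r)^2"
    if "r \<in> {0..1}" for r
    using that w ramp_extension_eq_inner[OF ord(2,3), of r b psi] by (auto simp: indicator_def)
  ultimately have "(LINT r:{0..1}|lborel. indicator {a..b} r * (\<omega> r * (psi r)^2))
      \<le> (LINT r:{0..1}|lborel. w r * (ramp_extension X Y a b psi r)^2)"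
    by (rule set_integral_mono)
  then show ?thesis
    using ab by (simp add: set_integral_indicator_mult)
qed

lemma lam_le_energy:
  fixes phi g :: "real \<Rightarrow> real"
  assumes phi: "H1_pair 0 1 phi g" and c: "\<forall>r\<in>{0..1}. 0 \<le> c r"
    and D: "1 \<le> (LINT r:{0..1}|lborel. r^(d-1) * exp (2 * s * m r) * (phi r)^2)"
  shows "lam d m c s \<le> (LINT r:{0..1}|lborel. r^(d-1) * exp (2 * s * m r) * ((g r)^2 + c r * (phi r)^2))"
proof -
  define N where "N = (LINT r:{0..1}|lborel. r^(d-1) * exp (2 * s * m r) * ((g r)^2 + c r * (phi r)^2))"
  define D where "D = (LINT r:{0..1}|lborel. r^(d-1) * exp (2 * s * m r) * (phi r)^2)"
  have w: "\<forall>r\<in>{0..1}. 0 \<le> r^(d-1) * exp (2 * s * m r) \<and> 0 \<le> c r"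
    using c by simp
  have "0 \<le> N"
    unfolding N_def using w by (intro set_integral_nonneg) (auto intro!: mult_nonneg_nonneg add_nonneg_nonneg)
  have "lam d m c s \<le> N / D"
    unfolding lam_def N_def D_def using D by (intro Inf_rayleigh_values_le_quotient[OF phi w]) simp
  also have "\<dots> \<le> N / 1"
    using D \<open>0 \<le> N\<close> by (intro divide_left_mono) (auto simp: D_def)
  finally show ?thesis
    by (simp add: N_def)
qed

lemma lam_le_ramp_energy:
  fixes m c psi g0 :: "real \<Rightarrow> real"
  assumes ab: "0 < a" "a < b" "a + b = 1"
    and m: "continuous_on {0..1} m" "\<forall>r\<in>{a..b}. m r = 0"
    and c: "continuous_on {0..1} c" "\<forall>r\<in>{0..1}. 0 \<le> c r \<and> c r \<le> C"
    and psi: "H1_pair a b psi g0" "(LINT r:{a..b}|lborel. r^(d-1) * (psi r)^2) = 1"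
    and XY: "0 \<le> X" "X < Y" "Y \<le> a" and "0 \<le> s"
    and M1: "\<forall>r\<in>{X..Y}. m r \<le> M1 \<and> m (1 - r) \<le> M1"
    and M2: "\<forall>r\<in>{Y..a}. m r \<le> M2 \<and> m (1 - r) \<le> M2"
  shows "lam d m c s \<le> (LINT r:{a..b}|lborel. r^(d-1) * ((g0 r)^2 + c r * (psi r)^2))
      + 2 * ((psi a)^2 + (psi b)^2) * (1 + C) * (exp (2 * s * M1) / (Y - X) + exp (2 * s * M2) * (a - Y))"
proof -
  define w where "w r = r^(d-1) * exp (2 * s * m r)" for r
  have b: "b = 1 - a"
    using ab by simp
  have ord: "0 \<le> X" "X < Y" "Y \<le> a" "a < b" "b \<le> 1 - Y"
    using ab XY by auto
  have w: "continuous_on {0..1} w" "\<forall>r\<in>{0..1}. 0 \<le> w r" "\<forall>r\<in>{a..b}. w r = r^(d-1)"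
    using m by (auto simp: w_def intro!: continuous_intros)
  have "continuous_on {a..b} (\<lambda>r. r^(d-1))"
    by (intro continuous_intros)
  then have "1 \<le> (LINT r:{0..1}|lborel. w r * (ramp_extension X Y a b psi r)^2)"
    using ramp_extension_weighted_norm_ge[OF ord psi(1) w] psi(2) by simp
  then have "lam d m c s \<le> (LINT r:{0..1}|lborel. w r * ((ramp_extension_deriv X Y a b psi g0 r)^2
      + c r * (ramp_extension X Y a b psi r)^2))"
    unfolding w_def using c(2) by (intro lam_le_energy H1_pair_ramp_extension[OF ord psi(1)]) auto
  also have "\<dots> \<le> (LINT r:{a..b}|lborel. r^(d-1) * ((g0 r)^2 + c r * (psi r)^2))
      + ((psi a)^2 + (psi b)^2) * (1 + C)
        * (2 * exp (2 * s * M1) / (Y - X) + exp (2 * s * M2) * ((a - Y) + (1 - Y - b)))"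
  proof (rule ramp_extension_energy_le[OF ord _ w(2,3) c(2)])
    show "set_integrable lborel {a..b} (\<lambda>r. r^(d-1) * ((g0 r)^2 + c r * (psi r)^2))"
      using ord by (intro H1_energy_integrable psi(1) continuous_intros continuous_on_subset[OF c(1)]) auto
    show "\<forall>r\<in>{X..Y} \<union> {1-Y..1-X}. w r \<le> exp (2 * s * M1)"
      "\<forall>r\<in>{Y..a} \<union> {b..1-Y}. w r \<le> exp (2 * s * M2)"
      using le_on_reflected_interval[OF M1] le_on_reflected_interval[OF M2] ord b \<open>0 \<le> s\<close>
      unfolding w_def by (auto intro: radial_weight_le)
  qed simp_all
  also have "\<dots> = (LINT r:{a..b}|lborel. r^(d-1) * ((g0 r)^2 + c r * (psi r)^2))
      + 2 * ((psi a)^2 + (psi b)^2) * (1 + C) * (exp (2 * s * M1) / (Y - X) + exp (2 * s * M2) * (a - Y))"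
    unfolding b by (simp add: algebra_simps)
  finally show ?thesis .
qed
section \<open>Choice of the scale n for large s\<close>

lemma exists_crossing_index:
  fixes s h A :: real and N l :: nat
  assumes h: "0 < h" "h < 1" and "0 < A" "1 \<le> N" and N: "A * (N + l) \<le> s * h^N"
  shows "\<exists>n\<ge>N. A * (n + l) \<le> s * h^n \<and> s * h^(Suc n) \<le> A * (Suc n + l)"
proof -
  define P where "P j \<longleftrightarrow> s * h^(N + j) < A * (N + j + l)" for j
  have "\<not> P 0"
    using N by (simp add: P_def)
  moreover have "\<exists>j. P j"
  proof -
    have "(\<lambda>j. s * h^N * h^j) \<longlonglongrightarrow> s * h^N * 0"
      using h by (intro tendsto_mult_left LIMSEQ_power_zero) auto
    then have "\<forall>\<^sub>F j in sequentially. s * h^N * h^j < A"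
      using \<open>0 < A\<close> by (intro order_tendstoD(2)) auto
    then obtain j where "s * h^(N + j) < A"
      unfolding eventually_sequentially power_add by (auto simp: mult.assoc)
    moreover have "A \<le> A * (N + j + l)"
      using \<open>0 < A\<close> \<open>1 \<le> N\<close> by simp
    ultimately show ?thesis
      unfolding P_def by (intro exI[of _ j]) linarith
  qed
  ultimately obtain j where "\<not> P j" "P (Suc j)"
    using exists_least_lemma by blast
  then show ?thesis
    unfolding P_def by (intro exI[of _ "N + j"]) (simp add: not_less)
qed

text \<open>The constant A is chosen so that 2 nu A - |ln beta| = |ln beta| - 2 A = kappa > 0; hence for
  s h^n close to A n both terms decay like exp(-kappa n).\<close>

lemma balanced_terms_le:
  fixes h \<beta> \<nu> s :: real and n l :: nat
  defines "A \<equiv> - ln \<beta> / (1 + \<nu>)" and "\<kappa> \<equiv> - ln \<beta> * (\<nu> - 1) / (\<nu> + 1)"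
  assumes \<beta>: "0 < \<beta>" "\<beta> < 1" and \<nu>: "1 < \<nu>"
    and low: "A * (n + l) \<le> s * h^n" and up: "s * h^(Suc n) \<le> A * (Suc n + l)"
  shows "exp (- 2 * s * \<nu> * h^n) / \<beta>^(n + l) + exp (2 * s * h^(Suc n)) * \<beta>^(n + l)
    \<le> (1 + exp (2 * A)) * exp (- \<kappa> * n)"
proof -
  define L where "L = - ln \<beta>"
  have \<kappa>: "0 \<le> \<kappa>"
    unfolding \<kappa>_def by (intro divide_nonneg_pos mult_nonneg_nonneg) (use \<beta> \<nu> in auto)
  have \<kappa>1: "2 * \<nu> * A - L = \<kappa>" and \<kappa>2: "L - 2 * A = \<kappa>"
    using \<nu> by (simp_all add: A_def \<kappa>_def L_def field_simps)
  have \<beta>_pow: "\<beta>^k = exp (- (real k * L))" for k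
  proof -
    have "\<beta>^k = exp (real k * ln \<beta>)"
      using \<beta> by (metis exp_ln exp_of_nat_mult)
    then show ?thesis by (simp add: L_def)
  qed
  have "exp (- 2 * s * \<nu> * h^n) / \<beta>^(n + l) = exp (- 2 * \<nu> * (s * h^n) + (n + l) * L)"
    by (simp add: \<beta>_pow exp_diff[symmetric] algebra_simps)
  also have "\<dots> \<le> exp (- 2 * \<nu> * (A * (n + l)) + (n + l) * L)"
    using low \<nu> by simp
  also have "\<dots> = exp (- (2 * \<nu> * A - L) * (n + l))"
    by (simp add: algebra_simps)
  also have "\<dots> \<le> exp (- \<kappa> * n)"
    unfolding \<kappa>1 using \<kappa> by (simp add: mult_left_mono)
  finally have first: "exp (- 2 * s * \<nu> * h^n) / \<beta>^(n + l) \<le> exp (- \<kappa> * n)" .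
  have "exp (2 * s * h^(Suc n)) * \<beta>^(n + l) = exp (2 * (s * h^(Suc n)) - (n + l) * L)"
    by (simp add: \<beta>_pow exp_add[symmetric] algebra_simps)
  also have "\<dots> \<le> exp (2 * (A * (Suc n + l)) - (n + l) * L)"
    using up by simp
  also have "\<dots> = exp (2 * A + - (L - 2 * A) * (n + l))"
    by (simp add: algebra_simps)
  also have "\<dots> \<le> exp (2 * A) * exp (- \<kappa> * n)"
    unfolding \<kappa>2 exp_add[symmetric] using \<kappa> by (simp add: mult_left_mono)
  finally show ?thesis
    using first by (simp add: algebra_simps)
qed

lemma eventually_exists_balanced_index:
  fixes h \<beta> \<nu> \<epsilon> :: real and l :: nat
  assumes h: "0 < h" "h < 1" and \<beta>: "0 < \<beta>" "\<beta> < 1" and \<nu>: "1 < \<nu>" and \<epsilon>: "0 < \<epsilon>"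
  shows "\<forall>\<^sub>F s in at_top. \<exists>n\<ge>1.
    exp (- 2 * s * \<nu> * h^n) / \<beta>^(n + l) + exp (2 * s * h^(Suc n)) * \<beta>^(n + l) \<le> \<epsilon>"
proof -
  define A where "A = - ln \<beta> / (1 + \<nu>)"
  define \<kappa> where "\<kappa> = - ln \<beta> * (\<nu> - 1) / (\<nu> + 1)"
  have A: "0 < A" and \<kappa>: "0 < \<kappa>"
    unfolding A_def \<kappa>_def by (intro divide_pos_pos mult_pos_pos; use \<beta> \<nu> in simp)+
  have "(\<lambda>n. (1 + exp (2 * A)) * exp (- \<kappa>) ^ n) \<longlonglongrightarrow> (1 + exp (2 * A)) * 0"
    using \<kappa> by (intro tendsto_mult_left LIMSEQ_power_zero) auto
  then have "\<forall>\<^sub>F n in sequentially. (1 + exp (2 * A)) * exp (- \<kappa>) ^ n < \<epsilon>"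
    using \<epsilon> by (intro order_tendstoD(2)) auto
  then obtain N0 where N0: "\<And>n. n \<ge> N0 \<Longrightarrow> (1 + exp (2 * A)) * exp (- \<kappa>) ^ n < \<epsilon>"
    unfolding eventually_sequentially by blast
  define N where "N = max N0 1"
  have "\<exists>n\<ge>1. exp (- 2 * s * \<nu> * h^n) / \<beta>^(n + l) + exp (2 * s * h^(Suc n)) * \<beta>^(n + l) \<le> \<epsilon>"
    if s: "A * (N + l) / h^N \<le> s" for s
  proof -
    obtain n where n: "n \<ge> N" "A * (n + l) \<le> s * h^n" "s * h^(Suc n) \<le> A * (Suc n + l)"
      using exists_crossing_index[OF h A, of N l s] s h by (auto simp: N_def field_simps)
    then have "exp (- 2 * s * \<nu> * h^n) / \<beta>^(n + l) + exp (2 * s * h^(Suc n)) * \<beta>^(n + l)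
        \<le> (1 + exp (2 * A)) * exp (- \<kappa> * n)"
      unfolding A_def \<kappa>_def using \<beta> \<nu> by (intro balanced_terms_le)
    also have "\<dots> < \<epsilon>"
      using N0[of n] n(1) by (simp add: N_def exp_of_nat_mult[symmetric] mult.commute)
    finally show ?thesis
      using n(1) by (intro exI[of _ n]) (simp add: N_def)
  qed
  then show ?thesis
    unfolding eventually_at_top_linorder by blast
qed

lemma error_le_balanced:
  fixes Q \<gamma> B e1 e2 t :: real
  assumes "0 \<le> Q" "1 \<le> \<gamma>" "0 < B" "0 \<le> e1" "0 \<le> e2" "t \<le> \<gamma> * B"
  shows "Q * (e1 / B + e2 * t) \<le> Q * \<gamma> * (e1 / B + e2 * B)"
proof -
  have "e1 / B \<le> \<gamma> * (e1 / B)"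
    using mult_right_mono[OF assms(2), of "e1 / B"] assms(3,4) by simp
  moreover have "e2 * t \<le> \<gamma> * (e2 * B)"
    using mult_left_mono[OF assms(6,5)] by (simp add: algebra_simps)
  ultimately have "e1 / B + e2 * t \<le> \<gamma> * (e1 / B + e2 * B)"
    by (simp add: algebra_simps)
  then show ?thesis
    using mult_left_mono[OF _ assms(1)] by (simp add: mult.assoc)
qed

section \<open>The partition points of the step function\<close>

locale step_points =
  fixes \<delta> \<alpha> \<beta> a :: real and l :: nat
  assumes pos: "0 < \<alpha>" "\<alpha> < \<beta>" "\<beta> < 1"
    and sums: "(\<lambda>i. \<alpha>^(Suc i + l) + \<beta>^(Suc i + l)) sums (a - \<delta>)"
begin

abbreviation Y :: "nat \<Rightarrow> real" where "Y \<equiv> stepY \<delta> \<alpha> \<beta> l"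
abbreviation X :: "nat \<Rightarrow> real" where "X \<equiv> stepX \<delta> \<alpha> \<beta> l"

definition gap :: "nat \<Rightarrow> real" where "gap i = \<alpha>^(Suc i + l) + \<beta>^(Suc i + l)"

lemma gap_pos: "0 < gap i"
  using pos by (simp add: gap_def add_pos_pos)

lemma sums_gap: "gap sums (a - \<delta>)"
  using sums unfolding gap_def .

lemma summable_gap: "summable gap"
  using sums_gap by (rule sums_summable)

lemma Y_eq: "Y n = \<delta> + (\<Sum>i<n. gap i)"
  unfolding stepY_def gap_def by (simp add: sum.atLeast1_atMost_eq)

lemma Y_Suc: "Y (Suc n) = Y n + gap n"
  by (simp add: Y_eq)

lemma X_eq: "X (Suc n) = Y n + \<alpha>^(Suc n + l)"
  by (simp add: stepX_def Y_Suc gap_def)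

lemma Y_mono: "m \<le> n \<Longrightarrow> Y m \<le> Y n"
  unfolding Y_eq using gap_pos by (intro add_left_mono sum_mono2) (auto intro: less_imp_le)

lemma X_ge: "\<delta> \<le> X (Suc n)"
  using X_eq[of n] Y_mono[of 0 n] pos by (simp add: stepY_def)

lemma Y_minus_X: "Y n - X n = \<beta>^(n + l)"
  by (simp add: stepX_def)

lemma a_minus_Y: "a - Y n = (\<Sum>j. gap (j + n))"
  using suminf_split_initial_segment[OF summable_gap, of n] sums_unique[OF sums_gap]
  by (simp add: Y_eq)

lemma Y_less: "Y n < a"
proof -
  have "0 < (\<Sum>j. gap (j + n))"
    by (rule suminf_pos[OF summable_ignore_initial_segment[OF summable_gap] gap_pos])
  then show ?thesis
    using a_minus_Y[of n] by simp
qed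

lemma a_minus_Y_le: "a - Y n \<le> 2 * \<beta>^(n + l + 1) / (1 - \<beta>)"
proof -
  have geom: "(\<lambda>j. 2 * \<beta>^(n + l + 1) * \<beta>^j) sums (2 * \<beta>^(n + l + 1) * (1 / (1 - \<beta>)))"
    using pos by (intro sums_mult geometric_sums) auto
  have "gap (j + n) \<le> 2 * \<beta>^(n + l + 1) * \<beta>^j" for j
  proof -
    have "\<alpha>^(Suc (j + n) + l) \<le> \<beta>^(Suc (j + n) + l)"
      using pos by (intro power_mono) auto
    then have "gap (j + n) \<le> 2 * \<beta>^(Suc (j + n) + l)"
      unfolding gap_def by linarith
    also have "\<beta>^(Suc (j + n) + l) = \<beta>^(n + l + 1) * \<beta>^j"
      by (simp add: power_add[symmetric] add_ac)
    finally show ?thesis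
      by (simp only: mult.assoc)
  qed
  then have "(\<Sum>j. gap (j + n)) \<le> 2 * \<beta>^(n + l + 1) * (1 / (1 - \<beta>))"
    using suminf_le[OF _ summable_ignore_initial_segment[OF summable_gap] sums_summable[OF geom]]
      sums_unique[OF geom] by simp
  then show ?thesis
    by (simp add: a_minus_Y)
qed

lemma Y_tendsto: "Y \<longlonglongrightarrow> a"
proof -
  have "(\<lambda>n. \<delta> + (\<Sum>i<n. gap i)) \<longlonglongrightarrow> \<delta> + (a - \<delta>)"
    using sums_gap unfolding sums_def by (intro tendsto_add tendsto_const)
  moreover have "Y = (\<lambda>n. \<delta> + (\<Sum>i<n. gap i))"
    using Y_eq by (intro ext)
  ultimately show ?thesis
    by simp
qed

lemma Y_bracket:
  assumes "Y n \<le> r" "r < a"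
  obtains k where "n \<le> k" "Y k \<le> r" "r < Y (Suc k)"
proof -
  define P where "P j \<longleftrightarrow> r < Y (n + j)" for j
  have "\<not> P 0"
    using assms by (simp add: P_def)
  moreover have "\<exists>j. P j"
  proof -
    have "\<forall>\<^sub>F j in sequentially. r < Y (j + n)"
      using LIMSEQ_ignore_initial_segment[OF Y_tendsto] assms(2) by (rule order_tendstoD(1))
    then show ?thesis
      unfolding P_def eventually_sequentially by (auto simp: add.commute)
  qed
  ultimately obtain j where "\<not> P j" "P (Suc j)"
    using exists_least_lemma by blast
  then show ?thesis
    by (intro that[of "n + j"]) (auto simp: P_def)
qed

lemma below_step_beyond:
  assumes "below_step m \<delta> h \<alpha> \<beta> \<nu> l" "0 \<le> h" "h \<le> 1" "0 \<le> \<nu>"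
    and r: "Y n \<le> r" "r < a"
  shows "m r \<le> h^(Suc n) \<and> m (1 - r) \<le> h^(Suc n)"
proof -
  obtain k where k: "n \<le> k" "Y k \<le> r" "r < Y (Suc k)"
    using Y_bracket[OF r] .
  have "h^(Suc k) \<le> h^(Suc n)"
    using k(1) assms(2,3) by (intro power_decreasing) auto
  moreover have "m r \<le> h^(Suc k) \<and> m (1 - r) \<le> h^(Suc k)"
  proof (cases "r \<le> X (Suc k)")
    case True
    then show ?thesis
      using assms(1) k unfolding below_step_def by (metis Suc_diff_1 atLeastAtMost_iff diff_Suc_1 le_add1 plus_1_eq_Suc)
  next
    case False
    then have "m r \<le> - \<nu> * h^(Suc k) \<and> m (1 - r) \<le> - \<nu> * h^(Suc k)"
      using assms(1) k unfolding below_step_def by (metis atLeastAtMost_iff diff_Suc_1 le_add1 less_imp_le not_le plus_1_eq_Suc)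
    moreover have "0 \<le> \<nu> * h^(Suc k)" "0 \<le> h^(Suc k)"
      using assms(2,4) by simp_all
    ultimately show ?thesis by linarith
  qed
  ultimately show ?thesis by linarith
qed

lemma below_step_plateau:
  assumes "below_step m \<delta> h \<alpha> \<beta> \<nu> l" "0 \<le> h" "h \<le> 1" "0 \<le> \<nu>" "m a = 0" "m (1 - a) = 0"
  shows "\<forall>r\<in>{Y n..a}. m r \<le> h^(Suc n) \<and> m (1 - r) \<le> h^(Suc n)"
proof
  fix r assume "r \<in> {Y n..a}"
  then show "m r \<le> h^(Suc n) \<and> m (1 - r) \<le> h^(Suc n)"
    using below_step_beyond[OF assms(1-4), of n r] assms(2,5,6) by (cases "r = a") auto
qed

lemma lam_le_at_index:
  fixes m c psi g0 :: "real \<Rightarrow> real" and d :: nat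
  assumes step: "0 < \<delta>" "0 < h" "h < 1" "1 < \<nu>" "below_step m \<delta> h \<alpha> \<beta> \<nu> l"
    and ab: "a < b" "a + b = 1"
    and m: "continuous_on {0..1} m" "\<forall>r\<in>{a..b}. m r = 0"
    and c: "continuous_on {0..1} c" "\<forall>r\<in>{0..1}. 0 \<le> c r \<and> c r \<le> C"
    and psi: "H1_pair a b psi g0" "(LINT r:{a..b}|lborel. r^(d-1) * (psi r)^2) = 1"
    and n: "1 \<le> n" and "0 \<le> s"
  defines "Q \<equiv> 2 * ((psi a)^2 + (psi b)^2) * (1 + C)"
  shows "lam d m c s \<le> (LINT r:{a..b}|lborel. r^(d-1) * ((g0 r)^2 + c r * (psi r)^2))
    + Q * (2 / (1 - \<beta>)) * (exp (- 2 * s * \<nu> * h^n) / \<beta>^(n + l) + exp (2 * s * h^(Suc n)) * \<beta>^(n + l))"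
proof -
  have a: "0 < a"
    using Y_less[of 0] step(1) by (simp add: stepY_def)
  have X0: "0 \<le> X n"
    using X_ge[of "n - 1"] n step(1) by simp
  have XY: "X n < Y n"
    using Y_minus_X[of n] zero_less_power[of \<beta> "n + l"] pos by linarith
  have Ya: "Y n \<le> a"
    using Y_less[of n] by simp
  have M1: "\<forall>r\<in>{X n..Y n}. m r \<le> - \<nu> * h^n \<and> m (1 - r) \<le> - \<nu> * h^n"
    using step(5) n unfolding below_step_def by blast
  have M2: "\<forall>r\<in>{Y n..a}. m r \<le> h^(Suc n) \<and> m (1 - r) \<le> h^(Suc n)"
    using m(2) ab step a by (intro below_step_plateau) (auto simp: eq_diff_eq')
  have "a - Y n \<le> 2 * \<beta>^(n + l + 1) / (1 - \<beta>)"
    by (rule a_minus_Y_le)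
  also have "\<dots> \<le> 2 / (1 - \<beta>) * \<beta>^(n + l)"
    using pos by (simp add: divide_right_mono mult_left_mono power_decreasing)
  finally have plateau: "a - Y n \<le> 2 / (1 - \<beta>) * \<beta>^(n + l)" .
  have "0 \<le> C"
    using c(2) by (meson atLeastAtMost_iff order.trans zero_le_one order.refl)
  have "lam d m c s \<le> (LINT r:{a..b}|lborel. r^(d-1) * ((g0 r)^2 + c r * (psi r)^2))
      + Q * (exp (2 * s * (- \<nu> * h^n)) / (Y n - X n) + exp (2 * s * h^(Suc n)) * (a - Y n))"
    unfolding Q_def by (rule lam_le_ramp_energy[OF a ab m c psi X0 XY Ya \<open>0 \<le> s\<close> M1 M2])
  also have "\<dots> \<le> (LINT r:{a..b}|lborel. r^(d-1) * ((g0 r)^2 + c r * (psi r)^2))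
      + Q * (2 / (1 - \<beta>)) * (exp (- 2 * s * \<nu> * h^n) / \<beta>^(n + l) + exp (2 * s * h^(Suc n)) * \<beta>^(n + l))"
  proof -
    have exp_eq: "exp (2 * s * (- \<nu> * h^n)) = exp (- 2 * s * \<nu> * h^n)"
      by simp
    show ?thesis
      unfolding Y_minus_X exp_eq using \<open>0 \<le> C\<close> pos plateau
      by (intro add_left_mono error_le_balanced) (auto simp: Q_def)
  qed
  finally show ?thesis .
qed

lemma lam_eventually_le_energy:
  fixes m c psi g0 :: "real \<Rightarrow> real" and d :: nat
  assumes step: "0 < \<delta>" "0 < h" "h < 1" "1 < \<nu>" "below_step m \<delta> h \<alpha> \<beta> \<nu> l"
    and ab: "a < b" "a + b = 1"
    and m: "continuous_on {0..1} m" "\<forall>r\<in>{a..b}. m r = 0"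
    and c: "continuous_on {0..1} c" "\<forall>r\<in>{0..1}. 0 \<le> c r \<and> c r \<le> C"
    and psi: "H1_pair a b psi g0" "(LINT r:{a..b}|lborel. r^(d-1) * (psi r)^2) = 1"
    and \<epsilon>: "0 < \<epsilon>"
  shows "\<forall>\<^sub>F s in at_top.
    lam d m c s \<le> (LINT r:{a..b}|lborel. r^(d-1) * ((g0 r)^2 + c r * (psi r)^2)) + \<epsilon>"
proof -
  define K where "K = 2 * ((psi a)^2 + (psi b)^2) * (1 + C) * (2 / (1 - \<beta>))"
  have "0 \<le> C"
    using c(2) by (meson atLeastAtMost_iff order.trans zero_le_one order.refl)
  then have K: "0 \<le> K"
    using pos by (simp add: K_def)
  have "\<forall>\<^sub>F s in at_top. \<exists>n\<ge>1. exp (- 2 * s * \<nu> * h^n) / \<beta>^(n + l)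
      + exp (2 * s * h^(Suc n)) * \<beta>^(n + l) \<le> \<epsilon> / (K + 1)"
    using pos step \<epsilon> K by (intro eventually_exists_balanced_index) auto
  moreover have "\<forall>\<^sub>F s in at_top. 0 \<le> (s::real)"
    by (rule eventually_ge_at_top)
  ultimately show ?thesis
  proof eventually_elim
    case (elim s)
    then obtain n where n: "1 \<le> n" and small: "exp (- 2 * s * \<nu> * h^n) / \<beta>^(n + l)
      + exp (2 * s * h^(Suc n)) * \<beta>^(n + l) \<le> \<epsilon> / (K + 1)"
      by blast
    have "K * (\<epsilon> / (K + 1)) \<le> \<epsilon>"
      using K \<epsilon> by (simp add: field_simps)
    then show ?case
      using lam_le_at_index[OF step ab m c psi n \<open>0 \<le> s\<close>] mult_left_mono[OF small K]
      unfolding K_def by linarith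
  qed
qed

end

lemma Limsup_le_of_eventually_le:
  fixes f :: "'a \<Rightarrow> real"
  assumes "\<And>\<epsilon>. 0 < \<epsilon> \<Longrightarrow> \<forall>\<^sub>F x in F. f x \<le> L + \<epsilon>"
  shows "Limsup F (\<lambda>x. ereal (f x)) \<le> ereal L"
proof (rule ereal_le_epsilon2)
  fix \<epsilon> :: real assume "0 < \<epsilon>"
  then have "\<forall>\<^sub>F x in F. ereal (f x) \<le> ereal L + ereal \<epsilon>"
    using assms by (auto elim: eventually_mono)
  then show "Limsup F (\<lambda>x. ereal (f x)) \<le> ereal L + ereal \<epsilon>"
    by (rule Limsup_bounded)
qed

theorem lemma3p8:
  fixes d :: nat and a b :: real and m m' c :: "real \<Rightarrow> real"
  assumes "d \<ge> 1"
    and "0 < a" "a < b" "b < 1" "a + b = 1"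
    and "\<forall>r\<in>{0..1}. (m has_real_derivative m' r) (at r within {0..1})"
    and "continuous_on {0..1} m'"
    and "\<exists>x\<in>{0..1}. \<exists>y\<in>{0..1}. m x \<noteq> m y"
    and "continuous_on {0..1} c"
    and H1: "\<forall>r\<in>{0..1}. m r = m (1 - r)" "\<forall>r\<in>{a..b}. m r = 0"
    and H2: "\<forall>r\<in>{0..1}. c r > 0" "\<forall>r\<in>{0..a} \<union> {b..1}. c r > lamD d c a b"
    and "in_SN a m m'"
  shows "Limsup at_top (\<lambda>s. ereal (lam d m c s)) \<le> ereal (lamN d c a b)"
proof (rule Limsup_le_of_eventually_le)
  \<comment> \<open>Not needed for this upper bound: d \<ge> 1, the symmetry of m (the bounds of S_N already hold
    at r and 1 - r), non-constancy of m, the sign changes of m', and c > lamD outside [a,b].\<close>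
  obtain \<delta> h \<alpha> \<beta> \<nu> l where step: "0 < \<delta>" "0 < h" "h < 1" "1 < \<nu>" "below_step m \<delta> h \<alpha> \<beta> \<nu> l"
    and points: "step_points \<delta> \<alpha> \<beta> a l"
    using \<open>in_SN a m m'\<close> unfolding in_SN_def step_points_def by (meson less_trans)
  have m: "continuous_on {0..1} m"
    using assms(6) by (intro DERIV_continuous_on) blast
  obtain C where c: "\<forall>r\<in>{0..1}. 0 \<le> c r \<and> c r \<le> C"
    using compact_imp_bounded[OF compact_continuous_image[OF assms(9)]] H2(1)
    unfolding bounded_iff by (metis atLeastAtMost_iff image_eqI less_imp_le real_norm_def abs_le_iff compact_Icc)
  fix \<epsilon> :: real assume "0 < \<epsilon>"
  have "\<forall>r\<in>{a..b}. 0 \<le> c r"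
    using c assms(2,4) by auto
  obtain psi g0 where psi: "H1_pair a b psi g0" "(LINT r:{a..b}|lborel. r^(d-1) * (psi r)^2) = 1"
    and near: "(LINT r:{a..b}|lborel. r^(d-1) * ((g0 r)^2 + c r * (psi r)^2)) < lamN d c a b + \<epsilon> / 2"
    by (rule lamN_near_minimizer[where d=d and \<epsilon>="\<epsilon> / 2"])
      (use assms(2,3) \<open>0 < \<epsilon>\<close> \<open>\<forall>r\<in>{a..b}. 0 \<le> c r\<close> in auto)
  have "\<forall>\<^sub>F s in at_top.
      lam d m c s \<le> (LINT r:{a..b}|lborel. r^(d-1) * ((g0 r)^2 + c r * (psi r)^2)) + \<epsilon> / 2"
    using step_points.lam_eventually_le_energy[OF points step assms(3,5) m H1(2) assms(9) c psi]
      \<open>0 < \<epsilon>\<close> by simp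
  then show "\<forall>\<^sub>F s in at_top. lam d m c s \<le> lamN d c a b + \<epsilon>"
    by eventually_elim (use near in linarith)
qed

end
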